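(* Let $\Gamma_\mu:\mathbb{R}^N_+\to\mathbb{R}^N_+$ be monotone, let $\kappa_0>0$, $\kappa_\Gamma>\kappa_h>0$, $\delta>0$, let $\phi$ be as in the context, and let $c\in\mathbb{R}^N_+$ with $\|c\|<\kappa_\Gamma/2$. Let $\tau=\langle y^1,\dots,y^{N+1}\rangle$ be an $N$-simplex of the triangulation $\tilde K_1(\delta)$ with vertices $y^j=(v^j,t_j)\in\mathbb{R}^N_+\times\{0,1\}$ such that $\|v^j\|>\kappa_\Gamma+\kappa_0+\delta$ for all $j=1,\dots,N+1$. Then $\tau$ is not complete (with respect to the labeling $l$ defined below).
   Context: Order on $\mathbb{R}^N$: $v\ge w$ iff $v_i\ge w_i$ for all $i$; $v>w$ iff $v\ge w$, $v\ne w$; $v\gg w$ iff $v_i>w_i$ for all $i$. $\|\cdot\|$ is the Euclidean norm, $e=(1,\dots,1)^\top$. Given $\kappa_0>0$, $\kappa_\Gamma>\kappa_h>0$, define $\phi:\mathbb{R}^N_+\to\mathbb{R}^N$ by $\phi(v)=\Gamma_\mu(v)\big(1+\min\{0,\frac{\kappa_\Gamma-2\|v\|}{\|v\|+\kappa_0}\}\big)+\max\{0,\kappa_h-2\|v\|\}e$. Triangulation $\tilde K_1(\delta)$: let $P=\mathrm{diag}(\delta,\dots,\delta,1)\in\mathbb{R}^{(N+1)\times(N+1)}$; its $(N+1)$-simplices are $\langle y^1,\dots,y^{N+2}\rangle$ where $y^1=(\delta z,0)$ with $z\in\mathbb{Z}^N$, and $y^{i+1}=y^i+Pe_{\pi(i)}$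 for $i=1,\dots,N+1$, $\pi$ a permutation of $\{1,\dots,N+1\}$ ($e_k$ the $k$-th unit vector of $\mathbb{R}^{N+1}$); in particular $y^{N+2}=y^1+(\delta,\dots,\delta,1)^\top$, all vertices lie in $\mathbb{R}^N\times\{0,1\}$, and $y^1<y^2<\dots<y^{N+2}$. Its $N$-simplices are the facets of these $(N+1)$-simplices, with vertices listed in increasing order. Homotopy: $\vartheta(v,t)=(1-t)c+t\phi(v)$; labeling: $l(v,t)=\vartheta(v,t)-v$ for vertices $(v,t)\in\mathbb{R}^N_+\times\{0,1\}$. Labeling matrix of $\tau=\langle y^1,\dots,y^{N+1}\rangle$: the $(N+1)\times(N+1)$ matrix $L(\tau)$ with $j$-th column $(1,l(y^j)^\top)^\top$. A matrix $W$ is lexicographically positive ($W\succ0$) if the first nonzero entry of each row is positive. $\tau$ is complete if there is $W$ with $L(\tau)W=I_{N+1}$ and $W\succ0$. *)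

theory Defs
  imports "HOL-Combinatorics.Permutations" "Jordan_Normal_Form.Matrix"
begin

text \<open>Vectors of R^N are Jordan_Normal_Form vectors of dimension N; the
(N+1)x(N+1) labeling matrix is a Jordan_Normal_Form matrix. Indices are 0-based.\<close>

definition enorm :: "real vec \<Rightarrow> real" where
  "enorm v = sqrt (\<Sum>i<dim_vec v. (v $ i)\<^sup>2)"

definition nonneg_vec :: "nat \<Rightarrow> real vec \<Rightarrow> bool" where
  "nonneg_vec N v \<longleftrightarrow> v \<in> carrier_vec N \<and> (\<forall>i<N. 0 \<le> v $ i)"

definition vec_le :: "real vec \<Rightarrow> real vec \<Rightarrow> bool" where
  "vec_le w v \<longleftrightarrow> dim_vec w = dim_vec v \<and> (\<forall>i<dim_vec v. w $ i \<le> v $ i)"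

definition monotone_map :: "nat \<Rightarrow> (real vec \<Rightarrow> real vec) \<Rightarrow> bool" where
  "monotone_map N G \<longleftrightarrow>
     (\<forall>v. nonneg_vec N v \<longrightarrow> nonneg_vec N (G v)) \<and>
     (\<forall>v w. nonneg_vec N v \<longrightarrow> nonneg_vec N w \<longrightarrow> vec_le w v \<longrightarrow> vec_le (G w) (G v))"

definition phi :: "nat \<Rightarrow> (real vec \<Rightarrow> real vec) \<Rightarrow> real \<Rightarrow> real \<Rightarrow> real \<Rightarrow> real vec \<Rightarrow> real vec" where
  "phi N G k0 kG kh v =
     (1 + min 0 ((kG - 2 * enorm v) / (enorm v + k0))) \<cdot>\<^sub>v G v
     + max 0 (kh - 2 * enorm v) \<cdot>\<^sub>v vec N (\<lambda>_. 1)"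

definition label :: "nat \<Rightarrow> real vec \<Rightarrow> (real vec \<Rightarrow> real vec) \<Rightarrow> real \<Rightarrow> real \<Rightarrow> real \<Rightarrow>
                      real vec \<times> real \<Rightarrow> real vec" where
  "label N c G k0 kG kh y =
     ((1 - snd y) \<cdot>\<^sub>v c + snd y \<cdot>\<^sub>v phi N G k0 kG kh (fst y)) - fst y"

text \<open>Vertex k (k = 0..N+1) of the (N+1)-simplex of K1~(delta) with base point
  (delta z, 0) and permutation pi of {0..N} (coordinate N is the t-coordinate):
  y_0 = (delta z, 0), y_(k+1) = y_k + P e_(pi k).\<close>
definition K1_vertex :: "nat \<Rightarrow> real \<Rightarrow> (nat \<Rightarrow> int) \<Rightarrow> (nat \<Rightarrow> nat) \<Rightarrow> nat \<Rightarrow> real vec \<times> real" where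
  "K1_vertex N \<delta> z \<pi> k =
     (vec N (\<lambda>j. \<delta> * (of_int (z j) + (if j \<in> \<pi> ` {..<k} then 1 else 0))),
      (if N \<in> \<pi> ` {..<k} then 1 else 0))"

text \<open>The facet obtained by omitting vertex m (m = 0..N+1), vertices listed in
  increasing order: vertex j = 0..N of the facet.\<close>
definition facet_vertex :: "nat \<Rightarrow> real \<Rightarrow> (nat \<Rightarrow> int) \<Rightarrow> (nat \<Rightarrow> nat) \<Rightarrow> nat \<Rightarrow> nat \<Rightarrow> real vec \<times> real" where
  "facet_vertex N \<delta> z \<pi> m j = K1_vertex N \<delta> z \<pi> (if j < m then j else Suc j)"

definition labeling_matrix :: "nat \<Rightarrow> (real vec \<times> real \<Rightarrow> real vec) \<Rightarrow> (nat \<Rightarrow> real vec \<times> real) \<Rightarrow> real mat" where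
  "labeling_matrix N l y = mat (N+1) (N+1) (\<lambda>(i,j). if i = 0 then 1 else l (y j) $ (i - 1))"

definition lex_pos :: "real mat \<Rightarrow> bool" where
  "lex_pos W \<longleftrightarrow> (\<forall>i<dim_row W. \<exists>j<dim_col W. 0 < W $$ (i,j) \<and> (\<forall>k<j. W $$ (i,k) = 0))"

definition complete_simplex :: "nat \<Rightarrow> (real vec \<times> real \<Rightarrow> real vec) \<Rightarrow> (nat \<Rightarrow> real vec \<times> real) \<Rightarrow> bool" where
  "complete_simplex N l y \<longleftrightarrow>
     (\<exists>W \<in> carrier_mat (N+1) (N+1). labeling_matrix N l y * W = 1\<^sub>m (N+1) \<and> lex_pos W)"

end

theory Submission
  imports Defs
begin

(* Suppose the facet tau = <y_0,...,y_N>, y_j = (v_j, t_j), were complete,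
   L(tau) W = I with W lexicographically positive.  The first column lam of W is then
   nonnegative, and L(tau) lam = e_1 says that lam is a convex combination weight with
   sum_j lam_j l(y_j) = 0, i.e. sum_j lam_j v_j = sum_j lam_j theta(v_j, t_j).
   Far from the origin (norm > kG + k0) the map phi has nonpositive components, so
   theta(v_j, t_j) <= c componentwise.  The vertices of a simplex of K1~(delta) are
   increasing, so v_0 <= v_j for all j.  Hence 0 <= v_0 <= sum_j lam_j v_j <= c and
   therefore |v_0| <= |c| < kG/2, contradicting |v_0| > kG + k0 + delta. *)

lemma enorm_mono:
  assumes "a \<in> carrier_vec N" "b \<in> carrier_vec N"
    and "\<And>i. i < N \<Longrightarrow> 0 \<le> a $ i \<and> a $ i \<le> b $ i"
  shows "enorm a \<le> enorm b"
  unfolding enorm_def using assms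
  by (auto intro!: real_sqrt_le_mono sum_mono power_mono)

lemma lex_pos_first_col_nonneg:
  assumes "lex_pos W" and "i < dim_row W"
  shows "0 \<le> W $$ (i, 0)"
proof -
  obtain k where "k < dim_col W" "0 < W $$ (i, k)" "\<forall>k'<k. W $$ (i, k') = 0"
    using assms unfolding lex_pos_def by blast
  then show ?thesis by (cases "k = 0") auto
qed

text \<open>A complete N-simplex carries convex weights under which the labels cancel:
  the first column of the lexicographically positive inverse of the labeling matrix.\<close>

lemma complete_simplex_weights:
  assumes "complete_simplex N l y"
  obtains lam :: "nat \<Rightarrow> real"
  where "\<And>j. j < N + 1 \<Longrightarrow> 0 \<le> lam j"
    and "(\<Sum>j<N+1. lam j) = 1"
    and "\<And>i. i < N \<Longrightarrow> (\<Sum>j<N+1. lam j * l (y j) $ i) = 0"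
proof -
  define L where "L = labeling_matrix N l y"
  obtain W where W: "W \<in> carrier_mat (N+1) (N+1)" and LW: "L * W = 1\<^sub>m (N+1)"
    and lp: "lex_pos W"
    using assms unfolding complete_simplex_def L_def by blast
  define lam where "lam j = W $$ (j, 0)" for j
  have L: "L \<in> carrier_mat (N+1) (N+1)" unfolding L_def labeling_matrix_def by simp
  have row: "(\<Sum>j<N+1. L $$ (i, j) * lam j) = (if i = 0 then 1 else 0)" if i: "i < N+1" for i
  proof -
    have "(\<Sum>j<N+1. L $$ (i, j) * lam j) = row L i \<bullet> col W 0"
      unfolding scalar_prod_def lam_def lessThan_atLeast0
      by (rule sum.cong) (use i L W in auto)
    also have "\<dots> = (L * W) $$ (i, 0)" using i L W by simp
    also have "\<dots> = (if i = 0 then 1 else 0)" using LW i by simp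
    finally show ?thesis .
  qed
  show ?thesis
  proof
    show "0 \<le> lam j" if "j < N + 1" for j
      using lex_pos_first_col_nonneg[OF lp] that W unfolding lam_def by auto
    show "(\<Sum>j<N+1. lam j) = 1"
      using row[of 0] unfolding L_def labeling_matrix_def by simp
    show "(\<Sum>j<N+1. lam j * l (y j) $ i) = 0" if "i < N" for i
      using row[of "Suc i"] that unfolding L_def labeling_matrix_def
      by (simp add: mult.commute)
  qed
qed

text \<open>Far from the origin the damping factor of phi is negative and the additive
  correction vanishes, so phi has nonpositive components there.\<close>

lemma phi_comp_nonpos:
  assumes mono: "monotone_map N G" and v: "nonneg_vec N v"
    and far: "enorm v > kG + k0" and k0: "k0 > 0" and kh: "kh > 0" and khG: "kG > kh"
    and i: "i < N"
  shows "phi N G k0 kG kh v $ i \<le> 0"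
proof -
  have "nonneg_vec N (G v)" using mono v unfolding monotone_map_def by blast
  hence dG: "dim_vec (G v) = N" and Gi: "0 \<le> G v $ i" using i unfolding nonneg_vec_def by auto
  define n where "n = enorm v"
  have "n + k0 > 0" using far khG kh k0 n_def by linarith
  hence "(kG - 2 * n) / (n + k0) < -1" using far n_def by (simp add: divide_less_eq)
  hence factor: "1 + min 0 ((kG - 2 * n) / (n + k0)) < 0" by linarith
  have correction: "max 0 (kh - 2 * n) = 0" using far khG kh k0 n_def by auto
  have "phi N G k0 kG kh v $ i = (1 + min 0 ((kG - 2 * n) / (n + k0))) * G v $ i"
    unfolding phi_def n_def[symmetric] correction using i dG by simp
  also have "\<dots> \<le> 0" using factor Gi by (simp add: mult_nonpos_nonneg)
  finally show ?thesis .
qed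

lemma label_le_c:
  assumes mono: "monotone_map N G" and v: "nonneg_vec N (fst y)"
    and far: "enorm (fst y) > kG + k0" and k0: "k0 > 0" and kh: "kh > 0" and khG: "kG > kh"
    and t: "0 \<le> snd y" "snd y \<le> 1" and c: "nonneg_vec N c" and i: "i < N"
  shows "label N c G k0 kG kh y $ i \<le> c $ i - fst y $ i"
proof -
  have dims: "c \<in> carrier_vec N" "dim_vec (G (fst y)) = N" "dim_vec (fst y) = N"
    using mono v c unfolding monotone_map_def nonneg_vec_def by auto
  have ci: "0 \<le> c $ i" using c i unfolding nonneg_vec_def by auto
  have "(1 - snd y) * c $ i \<le> c $ i" using t ci by (simp add: mult_left_le_one_le)
  moreover have "snd y * phi N G k0 kG kh (fst y) $ i \<le> 0"
    using t phi_comp_nonpos[OF mono v far k0 kh khG i] by (simp add: mult_nonneg_nonpos)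
  moreover have "label N c G k0 kG kh y $ i
      = (1 - snd y) * c $ i + snd y * phi N G k0 kG kh (fst y) $ i - fst y $ i"
    using dims i unfolding label_def phi_def by simp
  ultimately show ?thesis by linarith
qed

lemma K1_vertex_mono:
  assumes "\<delta> \<ge> 0" and "k \<le> k'" and "i < N"
  shows "fst (K1_vertex N \<delta> z \<pi> k) $ i \<le> fst (K1_vertex N \<delta> z \<pi> k') $ i"
proof -
  have "\<pi> ` {..<k} \<subseteq> \<pi> ` {..<k'}" using assms(2) by auto
  hence "(if i \<in> \<pi> ` {..<k} then 1 else 0) \<le> (if i \<in> \<pi> ` {..<k'} then 1 else (0::real))"
    by auto
  hence "\<delta> * (of_int (z i) + (if i \<in> \<pi> ` {..<k} then 1 else 0))
      \<le> \<delta> * (of_int (z i) + (if i \<in> \<pi> ` {..<k'} then 1 else 0))"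
    using assms(1) by (intro mult_left_mono) auto
  thus ?thesis using assms(3) unfolding K1_vertex_def by simp
qed

lemma facet_vertex_first_le:
  assumes "\<delta> \<ge> 0" and "i < N"
  shows "fst (facet_vertex N \<delta> z \<pi> m 0) $ i \<le> fst (facet_vertex N \<delta> z \<pi> m j) $ i"
  unfolding facet_vertex_def using assms by (intro K1_vertex_mono) auto

lemma facet_vertex_level:
  "0 \<le> snd (facet_vertex N \<delta> z \<pi> m j) \<and> snd (facet_vertex N \<delta> z \<pi> m j) \<le> 1"
  unfolding facet_vertex_def K1_vertex_def by auto

lemma convex_cancel_le:
  fixes lam x lab :: "'a \<Rightarrow> real"
  assumes "finite A" and "\<And>j. j \<in> A \<Longrightarrow> 0 \<le> lam j" and "sum lam A = 1"
    and "\<And>j. j \<in> A \<Longrightarrow> a \<le> x j" and "\<And>j. j \<in> A \<Longrightarrow> lab j \<le> b - x j"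
    and "(\<Sum>j\<in>A. lam j * lab j) = 0"
  shows "a \<le> b"
proof -
  have "a = (\<Sum>j\<in>A. lam j * a)" using assms(3) by (simp add: sum_distrib_right[symmetric])
  also have "\<dots> \<le> (\<Sum>j\<in>A. lam j * x j)"
    using assms(2,4) by (intro sum_mono mult_left_mono) auto
  also have "\<dots> = (\<Sum>j\<in>A. lam j * (x j + lab j))"
    using assms(6) by (simp add: distrib_left sum.distrib)
  also have "\<dots> \<le> (\<Sum>j\<in>A. lam j * b)"
    using assms(2,5) by (intro sum_mono mult_left_mono) (auto simp: algebra_simps)
  also have "\<dots> = b" using assms(3) by (simp add: sum_distrib_right[symmetric])
  finally show ?thesis .
qed

theorem mainTheorem3:
  fixes N :: nat and G :: "real vec \<Rightarrow> real vec"
    and k0 kG kh \<delta> :: real and c :: "real vec"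
    and z :: "nat \<Rightarrow> int" and \<pi> :: "nat \<Rightarrow> nat" and m :: nat
  assumes mono: "monotone_map N G"
    and k0: "k0 > 0" and kh: "kh > 0" and khG: "kG > kh"
    and \<delta>: "\<delta> > 0"
    and c: "nonneg_vec N c" and c_small: "enorm c < kG / 2"
    and perm: "\<pi> permutes {..N}" and m: "m \<le> N + 1"
    and vert_nonneg: "\<forall>j\<le>N. nonneg_vec N (fst (facet_vertex N \<delta> z \<pi> m j))"
    and vert_far: "\<forall>j\<le>N. enorm (fst (facet_vertex N \<delta> z \<pi> m j)) > kG + k0 + \<delta>"
  shows "\<not> complete_simplex N (label N c G k0 kG kh) (facet_vertex N \<delta> z \<pi> m)"
proof
  define y where "y = facet_vertex N \<delta> z \<pi> m"
  assume "complete_simplex N (label N c G k0 kG kh) y"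
  then obtain lam where lam: "\<And>j. j < N + 1 \<Longrightarrow> 0 \<le> lam j" "(\<Sum>j<N+1. lam j) = 1"
    and cancel: "\<And>i. i < N \<Longrightarrow> (\<Sum>j<N+1. lam j * label N c G k0 kG kh (y j) $ i) = 0"
    by (rule complete_simplex_weights) blast
  have v0: "nonneg_vec N (fst (y 0))" and far0: "enorm (fst (y 0)) > kG + k0 + \<delta>"
    using vert_nonneg vert_far unfolding y_def by auto
  have "0 \<le> fst (y 0) $ i \<and> fst (y 0) $ i \<le> c $ i" if i: "i < N" for i
  proof
    show "0 \<le> fst (y 0) $ i" using v0 i unfolding nonneg_vec_def by auto
    show "fst (y 0) $ i \<le> c $ i"
    proof (rule convex_cancel_le[of "{..<N+1}" lam])
      show "fst (y 0) $ i \<le> fst (y j) $ i" for j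
        using facet_vertex_first_le \<delta> i unfolding y_def by auto
      show "label N c G k0 kG kh (y j) $ i \<le> c $ i - fst (y j) $ i" if "j \<in> {..<N+1}" for j
      proof (rule label_le_c[OF mono _ _ k0 kh khG _ _ c i])
        have "enorm (fst (y j)) > kG + k0 + \<delta>" using vert_far that unfolding y_def by auto
        thus "enorm (fst (y j)) > kG + k0" using \<delta> by linarith
      qed (use that vert_nonneg facet_vertex_level in \<open>auto simp: y_def\<close>)
    qed (use lam cancel[OF i] in auto)
  qed
  hence "enorm (fst (y 0)) \<le> enorm c"
    using enorm_mono v0 c unfolding nonneg_vec_def by blast
  with far0 c_small k0 \<delta> kh khG show False by linarith
qed

end
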